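(* Let $\mathbf k$ be an algebraically closed field of characteristic zero, $n\geq 1$, $\zeta\in\mathbf k$ an $n$-th root of unity, and let $F:\mathcal D_{\zeta,n}\to\langle\delta_1\rangle$ be the functor defined below. Then for every $k\in\mathbb N$ the induced map $\mathrm{Hom}_{\mathcal D_{\zeta,n}}(k,0)\to\mathrm{Hom}_{\mathrm{Vec}_{\mathbb Z_n}^{\zeta}}(\delta_1^{\otimes k},\mathbf 1)$ is injective.
   Context: $\mathrm{Vec}_{\mathbb Z_n}^{\zeta}$ is the fusion category of finite-dimensional $\mathbb Z_n$-graded $\mathbf k$-vector spaces with graded tensor product, unit $\mathbf 1=\delta_0$, unit isomorphisms identities, and associativity on $(\delta_a\otimes\delta_b)\otimes\delta_c$ given by multiplication by $\zeta^{\,a(b+c-\overline{b+c})/n}$ ($a,b,c\in\{0,\dots,n-1\}$, $\overline{m}$ the remainder of $m$ mod $n$); $\delta_a$ is the simple object concentrated in degree $a$. $\langle\delta_1\rangle$ is the full monoidal subcategory of $\mathrm{Vec}_{\mathbb Z_n}^{\zeta}$ with objects $\delta_1^{\otimes k}$, $k\in\mathbb N$. $\mathcal D_{\zeta,n}$ is the strict $\mathbf k$-linear monoidal category with objects $k\in\mathbb N$, $k\otimes l=k+l$, unit $0$, whose morphisms are generated under composition, tensor product and linear combinations by $\mathrm{id}_1$, $f_n:n\to 0$ and $g_n:0\to n$, subject to $f_n\circ g_n=\mathrm{id}_0$, $g_n\circ f_n=\mathrm{id}_n$, and $\mathrm{id}_1\otimes f_n=\zeta\,(f_n\otimes\mathrm{id}_1)$.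 The $\mathbf k$-linear monoidal functor $F$ is defined by $F(1)=\delta_1$, $F(f_n)=\lambda$ the canonical isomorphism $\delta_1^{\otimes n}\xrightarrow{\sim}\mathbf 1$, and $F(g_n)=\lambda^{-1}$. *)

theory Defs
  imports Complex_Main "HOL-Computational_Algebra.Polynomial"
begin

definition alg_closed :: "'k::field itself \<Rightarrow> bool" where
  "alg_closed _ \<longleftrightarrow> (\<forall>p :: 'k poly. degree p > 0 \<longrightarrow> (\<exists>x. poly p x = 0))"

text \<open>Raw morphism terms built from identities, f_n, g_n, composition and tensor.
  DComp a b stands for a composed after b.  DId k is the identity of object k.\<close>

datatype dterm = DId nat | Df | Dg | DComp dterm dterm | DTens dterm dterm

fun ddom :: "nat \<Rightarrow> dterm \<Rightarrow> nat" and dcod :: "nat \<Rightarrow> dterm \<Rightarrow> nat" where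
  "ddom n (DId k) = k"
| "ddom n Df = n"
| "ddom n Dg = 0"
| "ddom n (DComp a b) = ddom n b"
| "ddom n (DTens a b) = ddom n a + ddom n b"
| "dcod n (DId k) = k"
| "dcod n Df = 0"
| "dcod n Dg = n"
| "dcod n (DComp a b) = dcod n a"
| "dcod n (DTens a b) = dcod n a + dcod n b"

fun dwt :: "nat \<Rightarrow> dterm \<Rightarrow> bool" where
  "dwt n (DComp a b) = (dwt n a \<and> dwt n b \<and> ddom n a = dcod n b)"
| "dwt n (DTens a b) = (dwt n a \<and> dwt n b)"
| "dwt n _ = True"

definition dhom :: "nat \<Rightarrow> nat \<Rightarrow> nat \<Rightarrow> dterm \<Rightarrow> bool" where
  "dhom n k l t \<longleftrightarrow> dwt n t \<and> ddom n t = k \<and> dcod n t = l"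

text \<open>Formal k-linear combinations of terms (finitely supported coefficient functions).\<close>

definition is_dlc :: "nat \<Rightarrow> nat \<Rightarrow> nat \<Rightarrow> (dterm \<Rightarrow> 'k::field) \<Rightarrow> bool" where
  "is_dlc n k l x \<longleftrightarrow> finite {t. x t \<noteq> 0} \<and> (\<forall>t. x t \<noteq> 0 \<longrightarrow> dhom n k l t)"

definition single :: "dterm \<Rightarrow> dterm \<Rightarrow> 'k::field" where
  "single t = (\<lambda>s. if s = t then 1 else 0)"

definition ldiff :: "dterm \<Rightarrow> dterm \<Rightarrow> dterm \<Rightarrow> 'k::field" where
  "ldiff t u = (\<lambda>s. single t s - single u s)"

definition lcomp :: "dterm \<Rightarrow> (dterm \<Rightarrow> 'k::field) \<Rightarrow> dterm \<Rightarrow> 'k" where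
  "lcomp t x = (\<lambda>s. case s of DComp a b \<Rightarrow> (if a = t then x b else 0) | _ \<Rightarrow> 0)"

definition rcomp :: "dterm \<Rightarrow> (dterm \<Rightarrow> 'k::field) \<Rightarrow> dterm \<Rightarrow> 'k" where
  "rcomp t x = (\<lambda>s. case s of DComp a b \<Rightarrow> (if b = t then x a else 0) | _ \<Rightarrow> 0)"

definition ltens :: "dterm \<Rightarrow> (dterm \<Rightarrow> 'k::field) \<Rightarrow> dterm \<Rightarrow> 'k" where
  "ltens t x = (\<lambda>s. case s of DTens a b \<Rightarrow> (if a = t then x b else 0) | _ \<Rightarrow> 0)"

definition rtens :: "dterm \<Rightarrow> (dterm \<Rightarrow> 'k::field) \<Rightarrow> dterm \<Rightarrow> 'k" where
  "rtens t x = (\<lambda>s. case s of DTens a b \<Rightarrow> (if b = t then x a else 0) | _ \<Rightarrow> 0)"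

text \<open>The tensor ideal of null linear combinations: it is generated by the axioms of a
  strict monoidal category (so that terms modulo it give the free strict k-linear monoidal
  category on id_1, f_n, g_n) together with the three defining relations of D_{zeta,n}.
  dnull z n k l x means: x is zero in Hom_D(k,l).\<close>

inductive dnull :: "'k::field \<Rightarrow> nat \<Rightarrow> nat \<Rightarrow> nat \<Rightarrow> (dterm \<Rightarrow> 'k) \<Rightarrow> bool"
  for z :: "'k" and n :: nat where
  zero: "dnull z n k l (\<lambda>_. 0)"
| add: "dnull z n k l x \<Longrightarrow> dnull z n k l y \<Longrightarrow> dnull z n k l (\<lambda>s. x s + y s)"
| smult: "dnull z n k l x \<Longrightarrow> dnull z n k l (\<lambda>s. c * x s)"
| assoc: "dhom n j l a \<Longrightarrow> dhom n i j b \<Longrightarrow> dhom n h i c \<Longrightarrow>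
          dnull z n h l (ldiff (DComp (DComp a b) c) (DComp a (DComp b c)))"
| idl: "dhom n k l a \<Longrightarrow> dnull z n k l (ldiff (DComp (DId l) a) a)"
| idr: "dhom n k l a \<Longrightarrow> dnull z n k l (ldiff (DComp a (DId k)) a)"
| tassoc: "dhom n k1 l1 a \<Longrightarrow> dhom n k2 l2 b \<Longrightarrow> dhom n k3 l3 c \<Longrightarrow>
          dnull z n (k1 + k2 + k3) (l1 + l2 + l3)
            (ldiff (DTens (DTens a b) c) (DTens a (DTens b c)))"
| tunitl: "dhom n k l a \<Longrightarrow> dnull z n k l (ldiff (DTens (DId 0) a) a)"
| tunitr: "dhom n k l a \<Longrightarrow> dnull z n k l (ldiff (DTens a (DId 0)) a)"
| interchange: "dhom n j l a \<Longrightarrow> dhom n i j b \<Longrightarrow> dhom n j' l' c \<Longrightarrow> dhom n i' j' d \<Longrightarrow>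
          dnull z n (i + i') (l + l')
            (ldiff (DTens (DComp a b) (DComp c d)) (DComp (DTens a c) (DTens b d)))"
| idtens: "dnull z n (k + l) (k + l) (ldiff (DTens (DId k) (DId l)) (DId (k + l)))"
| rel_fg: "dnull z n 0 0 (ldiff (DComp Df Dg) (DId 0))"
| rel_gf: "dnull z n n n (ldiff (DComp Dg Df) (DId n))"
| rel_twist: "dnull z n (1 + n) 1
            (\<lambda>s. single (DTens (DId 1) Df) s - z * single (DTens Df (DId 1)) s)"
| compL: "dhom n l m t \<Longrightarrow> dnull z n k l x \<Longrightarrow> dnull z n k m (lcomp t x)"
| compR: "dhom n j k t \<Longrightarrow> dnull z n k l x \<Longrightarrow> dnull z n j l (rcomp t x)"
| tensL: "dhom n k' l' t \<Longrightarrow> dnull z n k l x \<Longrightarrow> dnull z n (k' + k) (l' + l) (ltens t x)"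
| tensR: "dhom n k' l' t \<Longrightarrow> dnull z n k l x \<Longrightarrow> dnull z n (k + k') (l + l') (rtens t x)"

text \<open>delta_a tensor delta_b = delta_{(a+b) mod n}; Hom(delta_a, delta_b) is k (scalars)
  if a = b and 0 otherwise; composition and tensor of morphisms are products of scalars.
  The associator on (delta_a tensor delta_b) tensor delta_c is the scalar below.\<close>

definition vassoc :: "'k::field \<Rightarrow> nat \<Rightarrow> nat \<Rightarrow> nat \<Rightarrow> nat \<Rightarrow> 'k" where
  "vassoc z n a b c = z ^ (a * (b + c - (b + c) mod n) div n)"

text \<open>Monoidal structure of F: J k l : F(k) tensor F(l) = delta_1^{k} tensor delta_1^{l}
  \<rightarrow> delta_1^{k+l}, where delta_1^{m} denotes the left-nested tensor power
  (delta_1^{0} = 1, delta_1^{m+1} = delta_1^{m} tensor delta_1), built from associators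
  (unit isomorphisms are identities).\<close>

fun Jmon :: "'k::field \<Rightarrow> nat \<Rightarrow> nat \<Rightarrow> nat \<Rightarrow> 'k" where
  "Jmon z n k 0 = 1"
| "Jmon z n k (Suc l) = Jmon z n k l * inverse (vassoc z n (k mod n) (l mod n) 1)"

text \<open>The functor F on terms: F(id) = identity, F(f_n) = lambda, F(g_n) = lambda^{-1}
  (lambda = canonical iso, the scalar 1), F preserves composition, and
  F(a tensor b) o J = J o (F a tensor F b).\<close>

fun Fterm :: "'k::field \<Rightarrow> nat \<Rightarrow> dterm \<Rightarrow> 'k" where
  "Fterm z n (DId k) = 1"
| "Fterm z n Df = 1"
| "Fterm z n Dg = 1"
| "Fterm z n (DComp a b) = Fterm z n a * Fterm z n b"
| "Fterm z n (DTens a b) =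
     Jmon z n (dcod n a) (dcod n b) * Fterm z n a * Fterm z n b
       * inverse (Jmon z n (ddom n a) (ddom n b))"

text \<open>F on Hom_D(k,l), valued in Hom(delta_{k mod n}, delta_{l mod n}) (scalars, which must be
  0 when k mod n \<noteq> l mod n).\<close>

definition Fhom :: "'k::field \<Rightarrow> nat \<Rightarrow> nat \<Rightarrow> nat \<Rightarrow> (dterm \<Rightarrow> 'k) \<Rightarrow> 'k" where
  "Fhom z n k l x =
     (if k mod n = l mod n then (\<Sum>t\<in>{t. x t \<noteq> 0}. x t * Fterm z n t) else 0)"

end

theory Submission
  imports Defs
begin

text \<open>
  Modulo the relations, every morphism term \<open>t : k \<rightarrow> l\<close> is a nonzero multiple of the normal
  form \<open>expand l \<circ> collapse k\<close>, where \<open>collapse k = id\<^bsub>k mod n\<^esub> \<otimes> f\<^sub>n\<^bsup>\<otimes>(k div n)\<^esup>\<close> and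
  \<open>expand l = id\<^bsub>l mod n\<^esub> \<otimes> g\<^sub>n\<^bsup>\<otimes>(l div n)\<^esup>\<close>: the relations \<open>f\<^sub>n g\<^sub>n = id\<close>, \<open>g\<^sub>n f\<^sub>n = id\<close> make \<open>collapse k\<close>
  invertible, and the twist relation lets copies of \<open>f\<^sub>n\<close> slide past identities at the cost of a
  power of \<open>\<zeta>\<close>. So \<open>Hom(k, l)\<close> is spanned by one vector. On the other side \<open>F\<close> respects all
  relations (for associativity of \<open>\<otimes>\<close> this is the compatibility of the monoidal structure \<open>J\<close>
  of \<open>F\<close> with the associator of \<open>Vec\<^bsub>Z\<^sub>n\<^esub>\<^bsup>\<zeta>\<^esup>\<close>) and sends every term to a nonzero scalar.
  A linear map on an at most one-dimensional space that is nonzero on a spanning vector is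
  injective.
\<close>

section \<open>Linear combinations of morphism terms\<close>

lemma rcomp_single_diff:
  "rcomp b (\<lambda>u. single a u - c * single a' u) =
     (\<lambda>u. single (DComp a b) u - c * single (DComp a' b) u)"
  by (rule ext, case_tac u) (auto simp: rcomp_def single_def)

lemma lcomp_single_diff:
  "lcomp a (\<lambda>u. single b u - c * single b' u) =
     (\<lambda>u. single (DComp a b) u - c * single (DComp a b') u)"
  by (rule ext, case_tac u) (auto simp: lcomp_def single_def)

lemma rtens_single_diff:
  "rtens b (\<lambda>u. single a u - c * single a' u) =
     (\<lambda>u. single (DTens a b) u - c * single (DTens a' b) u)"
  by (rule ext, case_tac u) (auto simp: rtens_def single_def)

lemma ltens_single_diff:
  "ltens a (\<lambda>u. single b u - c * single b' u) =
     (\<lambda>u. single (DTens a b) u - c * single (DTens a b') u)"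
  by (rule ext, case_tac u) (auto simp: ltens_def single_def)

lemma dwt_ddom_mod_eq_dcod_mod: "dwt n t \<Longrightarrow> ddom n t mod n = dcod n t mod n"
  by (induction t) (auto intro: mod_add_cong)

lemma dnull_sum:
  assumes "finite A" and "\<And>t. t \<in> A \<Longrightarrow> dnull z n k l (v t)"
  shows "dnull z n k l (\<lambda>u. \<Sum>t\<in>A. a t * v t u)"
  using assms
proof (induction A rule: finite_induct)
  case empty
  then show ?case by (simp add: dnull.zero)
next
  case (insert t A)
  then have "dnull z n k l (\<lambda>u. a t * v t u + (\<Sum>t\<in>A. a t * v t u))"
    by (intro dnull.add dnull.smult) simp_all
  then show ?case using insert.hyps by simp
qed

lemma support_image:
  assumes "inj h" and "\<And>s. y (h s) = x s" and "\<And>u. u \<notin> range h \<Longrightarrow> y u = 0"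
  shows "{u. y u \<noteq> 0} = h ` {s. x s \<noteq> 0}"
proof (rule set_eqI)
  fix u
  show "u \<in> {u. y u \<noteq> 0} \<longleftrightarrow> u \<in> h ` {s. x s \<noteq> 0}"
  proof (cases "u \<in> range h")
    case True
    then obtain s where "u = h s" by blast
    then show ?thesis using assms(1,2) by (simp add: inj_image_mem_iff)
  next
    case False
    then show ?thesis using assms(3) by blast
  qed
qed

lemma support_lcomp: "{u. lcomp t x u \<noteq> 0} = DComp t ` {s. x s \<noteq> 0}"
proof (rule support_image)
  fix u assume "u \<notin> range (DComp t)"
  then show "lcomp t x u = 0" by (cases u) (auto simp: lcomp_def)
qed (auto simp: inj_def lcomp_def)

lemma support_rcomp: "{u. rcomp t x u \<noteq> 0} = (\<lambda>s. DComp s t) ` {s. x s \<noteq> 0}"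
proof (rule support_image)
  fix u assume "u \<notin> range (\<lambda>s. DComp s t)"
  then show "rcomp t x u = 0" by (cases u) (auto simp: rcomp_def)
qed (auto simp: inj_def rcomp_def)

lemma support_ltens: "{u. ltens t x u \<noteq> 0} = DTens t ` {s. x s \<noteq> 0}"
proof (rule support_image)
  fix u assume "u \<notin> range (DTens t)"
  then show "ltens t x u = 0" by (cases u) (auto simp: ltens_def)
qed (auto simp: inj_def ltens_def)

lemma support_rtens: "{u. rtens t x u \<noteq> 0} = (\<lambda>s. DTens s t) ` {s. x s \<noteq> 0}"
proof (rule support_image)
  fix u assume "u \<notin> range (\<lambda>s. DTens s t)"
  then show "rtens t x u = 0" by (cases u) (auto simp: rtens_def)
qed (auto simp: inj_def rtens_def)

lemma is_dlc_image:
  assumes "{u. y u \<noteq> 0} = h ` {s. x s \<noteq> 0}" and "finite {s. x s \<noteq> 0}"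
    and "\<And>s. x s \<noteq> 0 \<Longrightarrow> dhom n k l (h s)"
  shows "is_dlc n k l y"
  unfolding is_dlc_def
proof (intro conjI allI impI)
  show "finite {u. y u \<noteq> 0}"
    unfolding assms(1) using assms(2) by (rule finite_imageI)
  fix u
  assume "y u \<noteq> 0"
  then have "u \<in> h ` {s. x s \<noteq> 0}"
    unfolding assms(1)[symmetric] by simp
  then show "dhom n k l u"
    using assms(3) by auto
qed

lemma is_dlc_single_diff:
  assumes "dhom n k l a" and "dhom n k l b"
  shows "is_dlc n k l (\<lambda>u. single a u - c * single b u)"
  unfolding is_dlc_def
proof (intro conjI allI impI)
  have "{u. single a u - c * single b u \<noteq> 0} \<subseteq> {a, b}"
    by (auto simp: single_def)
  then show "finite {u. single a u - c * single b u \<noteq> 0}"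
    by (rule finite_subset) simp
  fix u
  assume "single a u - c * single b u \<noteq> 0"
  then have "u = a \<or> u = b"
    by (auto simp: single_def split: if_splits)
  then show "dhom n k l u"
    using assms by auto
qed

lemma is_dlc_ldiff: "dhom n k l a \<Longrightarrow> dhom n k l b \<Longrightarrow> is_dlc n k l (ldiff a b)"
  using is_dlc_single_diff[of n k l a b 1] by (simp add: ldiff_def)

lemma is_dlc_add:
  assumes "is_dlc n k l x" and "is_dlc n k l y"
  shows "is_dlc n k l (\<lambda>s. x s + y s)"
  unfolding is_dlc_def
proof (intro conjI allI impI)
  have "{s. x s + y s \<noteq> 0} \<subseteq> {t. x t \<noteq> 0} \<union> {t. y t \<noteq> 0}"
    by auto
  then show "finite {s. x s + y s \<noteq> 0}"
    by (rule finite_subset) (use assms in \<open>simp add: is_dlc_def\<close>)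
  fix t
  assume "x t + y t \<noteq> 0"
  then have "x t \<noteq> 0 \<or> y t \<noteq> 0"
    by auto
  then show "dhom n k l t"
    using assms by (auto simp: is_dlc_def)
qed

lemma is_dlc_smult:
  assumes "is_dlc n k l x"
  shows "is_dlc n k l (\<lambda>s. c * x s)"
  unfolding is_dlc_def
proof (intro conjI allI impI)
  show "finite {s. c * x s \<noteq> 0}"
    by (rule finite_subset[of _ "{s. x s \<noteq> 0}"]) (use assms in \<open>auto simp: is_dlc_def\<close>)
  fix t
  assume "c * x t \<noteq> 0"
  then show "dhom n k l t"
    using assms by (auto simp: is_dlc_def)
qed

lemma is_dlc_diff:
  assumes "is_dlc n k l x" and "is_dlc n k l y"
  shows "is_dlc n k l (\<lambda>s. x s - y s)"
proof -
  have "is_dlc n k l (\<lambda>s. x s + (- 1) * y s)"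
    by (rule is_dlc_add[OF assms(1) is_dlc_smult[OF assms(2)]])
  then show ?thesis by simp
qed

lemma dnull_is_dlc: "dnull z n k l x \<Longrightarrow> is_dlc n k l x"
proof (induction rule: dnull.induct)
  case (zero k l)
  then show ?case by (simp add: is_dlc_def)
next
  case (add k l x y)
  then show ?case by (simp add: is_dlc_add)
next
  case (smult k l x c)
  then show ?case by (simp add: is_dlc_smult)
next
  case (compL l m t k x)
  then show ?case
    by (intro is_dlc_image[OF support_lcomp]) (auto simp: is_dlc_def dhom_def)
next
  case (compR j k t l x)
  then show ?case
    by (intro is_dlc_image[OF support_rcomp]) (auto simp: is_dlc_def dhom_def)
next
  case (tensL k' l' t k l x)
  then show ?case
    by (intro is_dlc_image[OF support_ltens]) (auto simp: is_dlc_def dhom_def)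
next
  case (tensR k' l' t k l x)
  then show ?case
    by (intro is_dlc_image[OF support_rtens]) (auto simp: is_dlc_def dhom_def)
next
  case rel_twist
  then show ?case
    by (intro is_dlc_single_diff) (auto simp: dhom_def)
qed (auto simp: dhom_def intro: is_dlc_ldiff)

section \<open>Morphism terms up to a nonzero scalar\<close>

locale nth_root_of_unity =
  fixes z :: "'k::field" and n :: nat
  assumes n_pos: "n \<ge> 1" and z_pow_n: "z ^ n = 1"
begin

lemma z_nonzero: "z \<noteq> 0"
  using n_pos z_pow_n by (metis power_0_left le_zero_eq zero_neq_one)

definition eq_smult :: "dterm \<Rightarrow> 'k \<Rightarrow> dterm \<Rightarrow> bool" where
  "eq_smult t c s \<longleftrightarrow> dwt n t \<and> dwt n s \<and> ddom n s = ddom n t \<and> dcod n s = dcod n t \<and>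
     dnull z n (ddom n t) (dcod n t) (\<lambda>u. single t u - c * single s u)"

text \<open>
  Ignoring scalars absorbs the factor \<open>z\<close> of the twist relation, and loses nothing because
  \<open>Hom(k, l)\<close> turns out to be spanned by a single term.
\<close>

definition proportional :: "dterm \<Rightarrow> dterm \<Rightarrow> bool" where
  "proportional t s \<longleftrightarrow> (\<exists>c. c \<noteq> 0 \<and> eq_smult t c s)"

lemma eq_smult_refl: "dwt n t \<Longrightarrow> eq_smult t 1 t"
  unfolding eq_smult_def by (simp add: dnull.zero)

lemma eq_smult_sym:
  assumes "eq_smult t c s" and "c \<noteq> 0"
  shows "eq_smult s (inverse c) t"
proof -
  have "dnull z n (ddom n t) (dcod n t) (\<lambda>u. single t u - c * single s u)"
    using assms(1) by (simp add: eq_smult_def)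
  then have "dnull z n (ddom n t) (dcod n t) (\<lambda>u. (- inverse c) * (single t u - c * single s u))"
    by (rule dnull.smult)
  also have "(\<lambda>u. (- inverse c) * (single t u - c * single s u)) =
             (\<lambda>u. single s u - inverse c * single t u)"
    using assms(2) by (intro ext) (simp add: field_simps)
  finally show ?thesis using assms(1) unfolding eq_smult_def by auto
qed

lemma eq_smult_trans:
  assumes "eq_smult t c s" and "eq_smult s d u"
  shows "eq_smult t (c * d) u"
proof -
  have "dnull z n (ddom n t) (dcod n t) (\<lambda>v. single t v - c * single s v)"
    and "dnull z n (ddom n t) (dcod n t) (\<lambda>v. single s v - d * single u v)"
    using assms by (simp_all add: eq_smult_def)
  then have "dnull z n (ddom n t) (dcod n t)
               (\<lambda>v. (single t v - c * single s v) + c * (single s v - d * single u v))"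
    by (intro dnull.add dnull.smult)
  also have "(\<lambda>v. (single t v - c * single s v) + c * (single s v - d * single u v)) =
             (\<lambda>v. single t v - (c * d) * single u v)"
    by (simp add: algebra_simps)
  finally show ?thesis using assms unfolding eq_smult_def by auto
qed

lemma eq_smult_comp:
  assumes "eq_smult a c a'" and "eq_smult b d b'" and "ddom n a = dcod n b"
  shows "eq_smult (DComp a b) (c * d) (DComp a' b')"
proof -
  have "dnull z n (ddom n b) (dcod n a) (rcomp b (\<lambda>v. single a v - c * single a' v))"
    using assms by (intro dnull.compR) (auto simp: dhom_def eq_smult_def)
  then have "eq_smult (DComp a b) c (DComp a' b)"
    using assms by (auto simp: eq_smult_def rcomp_single_diff)
  moreover have "dnull z n (ddom n b) (dcod n a') (lcomp a' (\<lambda>v. single b v - d * single b' v))"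
    using assms by (intro dnull.compL) (auto simp: dhom_def eq_smult_def)
  then have "eq_smult (DComp a' b) d (DComp a' b')"
    using assms by (auto simp: eq_smult_def lcomp_single_diff)
  ultimately show ?thesis by (rule eq_smult_trans)
qed

lemma eq_smult_tens:
  assumes "eq_smult a c a'" and "eq_smult b d b'"
  shows "eq_smult (DTens a b) (c * d) (DTens a' b')"
proof -
  have "dnull z n (ddom n a + ddom n b) (dcod n a + dcod n b)
          (rtens b (\<lambda>v. single a v - c * single a' v))"
    using assms by (intro dnull.tensR) (auto simp: dhom_def eq_smult_def)
  then have "eq_smult (DTens a b) c (DTens a' b)"
    using assms by (auto simp: eq_smult_def rtens_single_diff)
  moreover have "dnull z n (ddom n a' + ddom n b) (dcod n a' + dcod n b)
                   (ltens a' (\<lambda>v. single b v - d * single b' v))"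
    using assms by (intro dnull.tensL) (auto simp: dhom_def eq_smult_def)
  then have "eq_smult (DTens a' b) d (DTens a' b')"
    using assms by (auto simp: eq_smult_def ltens_single_diff)
  ultimately show ?thesis by (rule eq_smult_trans)
qed

lemma proportional_refl: "dwt n t \<Longrightarrow> proportional t t"
  unfolding proportional_def using eq_smult_refl one_neq_zero by blast

lemma proportional_sym:
  assumes "proportional t s"
  shows "proportional s t"
proof -
  obtain c where "c \<noteq> 0" and "eq_smult t c s"
    using assms unfolding proportional_def by blast
  then have "inverse c \<noteq> 0" and "eq_smult s (inverse c) t"
    by (simp_all add: eq_smult_sym)
  then show ?thesis unfolding proportional_def by blast
qed

lemma proportional_trans [trans]:
  assumes "proportional t s" and "proportional s u"
  shows "proportional t u"
proof -
  obtain c d where "c \<noteq> 0" "eq_smult t c s" "d \<noteq> 0" "eq_smult s d u"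
    using assms unfolding proportional_def by blast
  then have "c * d \<noteq> 0" and "eq_smult t (c * d) u"
    by (simp_all add: eq_smult_trans)
  then show ?thesis unfolding proportional_def by blast
qed

lemma proportional_comp:
  assumes "proportional a a'" and "proportional b b'" and "ddom n a = dcod n b"
  shows "proportional (DComp a b) (DComp a' b')"
proof -
  obtain c d where "c \<noteq> 0" "eq_smult a c a'" "d \<noteq> 0" "eq_smult b d b'"
    using assms unfolding proportional_def by blast
  then have "c * d \<noteq> 0" and "eq_smult (DComp a b) (c * d) (DComp a' b')"
    using assms(3) by (simp_all add: eq_smult_comp)
  then show ?thesis unfolding proportional_def by blast
qed

lemma proportional_tens:
  assumes "proportional a a'" and "proportional b b'"
  shows "proportional (DTens a b) (DTens a' b')"
proof -
  obtain c d where "c \<noteq> 0" "eq_smult a c a'" "d \<noteq> 0" "eq_smult b d b'"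
    using assms unfolding proportional_def by blast
  then have "c * d \<noteq> 0" and "eq_smult (DTens a b) (c * d) (DTens a' b')"
    by (simp_all add: eq_smult_tens)
  then show ?thesis unfolding proportional_def by blast
qed

lemma proportional_of_ldiff:
  "dhom n k l t \<Longrightarrow> dhom n k l s \<Longrightarrow> dnull z n k l (ldiff t s) \<Longrightarrow> proportional t s"
  unfolding proportional_def eq_smult_def ldiff_def dhom_def by (rule exI[of _ 1]) auto

lemma proportional_comp_assoc:
  "dwt n a \<Longrightarrow> dwt n b \<Longrightarrow> dwt n c \<Longrightarrow> ddom n a = dcod n b \<Longrightarrow> ddom n b = dcod n c \<Longrightarrow>
   proportional (DComp (DComp a b) c) (DComp a (DComp b c))"
  by (rule proportional_of_ldiff[OF _ _ dnull.assoc]) (auto simp: dhom_def)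

lemma proportional_id_comp: "dwt n a \<Longrightarrow> dcod n a = l \<Longrightarrow> proportional (DComp (DId l) a) a"
  by (rule proportional_of_ldiff[OF _ _ dnull.idl]) (auto simp: dhom_def)

lemma proportional_comp_id: "dwt n a \<Longrightarrow> ddom n a = k \<Longrightarrow> proportional (DComp a (DId k)) a"
  by (rule proportional_of_ldiff[OF _ _ dnull.idr]) (auto simp: dhom_def)

lemma proportional_tens_assoc:
  "dwt n a \<Longrightarrow> dwt n b \<Longrightarrow> dwt n c \<Longrightarrow> proportional (DTens (DTens a b) c) (DTens a (DTens b c))"
  by (rule proportional_of_ldiff[OF _ _ dnull.tassoc]) (auto simp: dhom_def)

lemma proportional_unit_tens: "dwt n a \<Longrightarrow> proportional (DTens (DId 0) a) a"
  by (rule proportional_of_ldiff[OF _ _ dnull.tunitl]) (auto simp: dhom_def)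

lemma proportional_tens_unit: "dwt n a \<Longrightarrow> proportional (DTens a (DId 0)) a"
  by (rule proportional_of_ldiff[OF _ _ dnull.tunitr]) (auto simp: dhom_def)

lemma proportional_interchange:
  "dwt n a \<Longrightarrow> dwt n b \<Longrightarrow> dwt n c \<Longrightarrow> dwt n d \<Longrightarrow> ddom n a = dcod n b \<Longrightarrow> ddom n c = dcod n d \<Longrightarrow>
   proportional (DTens (DComp a b) (DComp c d)) (DComp (DTens a c) (DTens b d))"
  by (rule proportional_of_ldiff[OF _ _ dnull.interchange]) (auto simp: dhom_def)

lemma proportional_id_tens_id: "proportional (DTens (DId k) (DId l)) (DId (k + l))"
  by (rule proportional_of_ldiff[OF _ _ dnull.idtens]) (auto simp: dhom_def)

lemma proportional_f_g: "proportional (DComp Df Dg) (DId 0)"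
  by (rule proportional_of_ldiff[OF _ _ dnull.rel_fg]) (auto simp: dhom_def)

lemma proportional_g_f: "proportional (DComp Dg Df) (DId n)"
  by (rule proportional_of_ldiff[OF _ _ dnull.rel_gf]) (auto simp: dhom_def)

lemma proportional_twist: "proportional (DTens (DId 1) Df) (DTens Df (DId 1))"
  unfolding proportional_def eq_smult_def using z_nonzero dnull.rel_twist[of z n] by auto

end

section \<open>Normal forms\<close>

fun fpow :: "nat \<Rightarrow> dterm" where
  "fpow 0 = DId 0"
| "fpow (Suc p) = DTens Df (fpow p)"

fun gpow :: "nat \<Rightarrow> dterm" where
  "gpow 0 = DId 0"
| "gpow (Suc p) = DTens Dg (gpow p)"

lemma fpow_typing [simp]: "dwt n (fpow p)" "ddom n (fpow p) = p * n" "dcod n (fpow p) = 0"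
  by (induction p) auto

lemma gpow_typing [simp]: "dwt n (gpow p)" "ddom n (gpow p) = 0" "dcod n (gpow p) = p * n"
  by (induction p) auto

context nth_root_of_unity
begin

definition collapse :: "nat \<Rightarrow> dterm" where
  "collapse k = DTens (DId (k mod n)) (fpow (k div n))"

definition expand :: "nat \<Rightarrow> dterm" where
  "expand k = DTens (DId (k mod n)) (gpow (k div n))"

definition normal_form :: "nat \<Rightarrow> nat \<Rightarrow> dterm" where
  "normal_form k l = DComp (expand l) (collapse k)"

lemma collapse_typing [simp]:
  "dwt n (collapse k)" "ddom n (collapse k) = k" "dcod n (collapse k) = k mod n"
  by (auto simp: collapse_def)

lemma expand_typing [simp]:
  "dwt n (expand k)" "ddom n (expand k) = k mod n" "dcod n (expand k) = k"
  by (auto simp: expand_def)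

lemma f_tens_id_swap: "proportional (DTens Df (DId a)) (DTens (DId a) Df)"
proof (induction a)
  case 0
  have "proportional (DTens Df (DId 0)) Df" by (rule proportional_tens_unit) simp
  also have "proportional Df (DTens (DId 0) Df)"
    by (rule proportional_sym, rule proportional_unit_tens) simp
  finally show ?case .
next
  case (Suc a)
  have split: "proportional (DTens (DId a) (DId 1)) (DId (Suc a))"
    using proportional_id_tens_id[of a 1] by simp
  have "proportional (DTens Df (DId (Suc a))) (DTens Df (DTens (DId a) (DId 1)))"
    by (rule proportional_tens[OF proportional_refl proportional_sym[OF split]]) simp
  also have "proportional \<dots> (DTens (DTens Df (DId a)) (DId 1))"
    by (rule proportional_sym, rule proportional_tens_assoc) simp_all
  also have "proportional \<dots> (DTens (DTens (DId a) Df) (DId 1))"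
    by (rule proportional_tens[OF Suc proportional_refl]) simp
  also have "proportional \<dots> (DTens (DId a) (DTens Df (DId 1)))"
    by (rule proportional_tens_assoc) simp_all
  also have "proportional \<dots> (DTens (DId a) (DTens (DId 1) Df))"
    by (rule proportional_tens[OF proportional_refl proportional_sym[OF proportional_twist]]) simp
  also have "proportional \<dots> (DTens (DTens (DId a) (DId 1)) Df)"
    by (rule proportional_sym, rule proportional_tens_assoc) simp_all
  also have "proportional \<dots> (DTens (DId (Suc a)) Df)"
    by (rule proportional_tens[OF split proportional_refl]) simp
  finally show ?case .
qed

lemma fpow_tens_id_swap: "proportional (DTens (fpow p) (DId a)) (DTens (DId a) (fpow p))"
proof (induction p)
  case 0
  have "proportional (DTens (DId 0) (DId a)) (DId a)" by (rule proportional_unit_tens) simp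
  also have "proportional (DId a) (DTens (DId a) (DId 0))"
    by (rule proportional_sym, rule proportional_tens_unit) simp
  finally show ?case by simp
next
  case (Suc p)
  have "proportional (DTens (DTens Df (fpow p)) (DId a)) (DTens Df (DTens (fpow p) (DId a)))"
    by (rule proportional_tens_assoc) simp_all
  also have "proportional \<dots> (DTens Df (DTens (DId a) (fpow p)))"
    by (rule proportional_tens[OF proportional_refl Suc]) simp
  also have "proportional \<dots> (DTens (DTens Df (DId a)) (fpow p))"
    by (rule proportional_sym, rule proportional_tens_assoc) simp_all
  also have "proportional \<dots> (DTens (DTens (DId a) Df) (fpow p))"
    by (rule proportional_tens[OF f_tens_id_swap proportional_refl]) simp
  also have "proportional \<dots> (DTens (DId a) (DTens Df (fpow p)))"
    by (rule proportional_tens_assoc) simp_all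
  finally show ?case by simp
qed

lemma fpow_tens_fpow: "proportional (DTens (fpow p) (fpow q)) (fpow (p + q))"
proof (induction p)
  case 0
  show ?case by (simp add: proportional_unit_tens)
next
  case (Suc p)
  have "proportional (DTens (DTens Df (fpow p)) (fpow q)) (DTens Df (DTens (fpow p) (fpow q)))"
    by (rule proportional_tens_assoc) simp_all
  also have "proportional \<dots> (DTens Df (fpow (p + q)))"
    by (rule proportional_tens[OF proportional_refl Suc]) simp
  finally show ?case by simp
qed

lemma fpow_comp_gpow: "proportional (DComp (fpow p) (gpow p)) (DId 0)"
proof (induction p)
  case 0
  show ?case by (simp add: proportional_id_comp)
next
  case (Suc p)
  have "proportional (DComp (DTens Df (fpow p)) (DTens Dg (gpow p)))
          (DTens (DComp Df Dg) (DComp (fpow p) (gpow p)))"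
    by (rule proportional_sym, rule proportional_interchange) simp_all
  also have "proportional \<dots> (DTens (DId 0) (DId 0))"
    by (rule proportional_tens[OF proportional_f_g Suc])
  also have "proportional \<dots> (DId 0)"
    by (rule proportional_unit_tens) simp
  finally show ?case by simp
qed

lemma gpow_comp_fpow: "proportional (DComp (gpow p) (fpow p)) (DId (p * n))"
proof (induction p)
  case 0
  show ?case by (simp add: proportional_id_comp)
next
  case (Suc p)
  have "proportional (DComp (DTens Dg (gpow p)) (DTens Df (fpow p)))
          (DTens (DComp Dg Df) (DComp (gpow p) (fpow p)))"
    by (rule proportional_sym, rule proportional_interchange) simp_all
  also have "proportional \<dots> (DTens (DId n) (DId (p * n)))"
    by (rule proportional_tens[OF proportional_g_f Suc])
  also have "proportional \<dots> (DId (n + p * n))"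
    by (rule proportional_id_tens_id)
  finally show ?case by simp
qed

lemma collapse_comp_expand: "proportional (DComp (collapse k) (expand k)) (DId (k mod n))"
proof -
  have "proportional (DComp (collapse k) (expand k))
          (DTens (DComp (DId (k mod n)) (DId (k mod n))) (DComp (fpow (k div n)) (gpow (k div n))))"
    unfolding collapse_def expand_def
    by (rule proportional_sym, rule proportional_interchange) simp_all
  also have "proportional \<dots> (DTens (DId (k mod n)) (DId 0))"
    by (rule proportional_tens[OF proportional_id_comp fpow_comp_gpow]) simp_all
  also have "proportional \<dots> (DId (k mod n))"
    by (rule proportional_tens_unit) simp
  finally show ?thesis .
qed

lemma expand_comp_collapse: "proportional (DComp (expand k) (collapse k)) (DId k)"
proof -
  have "proportional (DComp (expand k) (collapse k))
          (DTens (DComp (DId (k mod n)) (DId (k mod n))) (DComp (gpow (k div n)) (fpow (k div n))))"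
    unfolding collapse_def expand_def
    by (rule proportional_sym, rule proportional_interchange) simp_all
  also have "proportional \<dots> (DTens (DId (k mod n)) (DId (k div n * n)))"
    by (rule proportional_tens[OF proportional_id_comp gpow_comp_fpow]) simp_all
  also have "proportional \<dots> (DId (k mod n + k div n * n))"
    by (rule proportional_id_tens_id)
  finally show ?thesis by simp
qed

lemma fpow_comp_id_tens_fpow:
  "proportional (DComp (fpow q) (DTens (DId (q * n)) (fpow p))) (fpow (q + p))"
proof -
  have "proportional (DComp (fpow q) (DTens (DId (q * n)) (fpow p)))
          (DComp (DTens (fpow q) (DId 0)) (DTens (DId (q * n)) (fpow p)))"
    by (rule proportional_comp[OF proportional_sym[OF proportional_tens_unit] proportional_refl]) simp_all
  also have "proportional \<dots> (DTens (DComp (fpow q) (DId (q * n))) (DComp (DId 0) (fpow p)))"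
    by (rule proportional_sym, rule proportional_interchange) simp_all
  also have "proportional \<dots> (DTens (fpow q) (fpow p))"
    by (rule proportional_tens[OF proportional_comp_id proportional_id_comp]) simp_all
  also have "proportional \<dots> (fpow (q + p))"
    by (rule fpow_tens_fpow)
  finally show ?thesis .
qed

lemma collapse_comp_id_tens_fpow:
  "proportional (DComp (collapse m) (DTens (DId m) (fpow p))) (collapse (m + p * n))"
proof -
  let ?r = "m mod n" and ?q = "m div n"
  have split: "proportional (DId m) (DTens (DId ?r) (DId (?q * n)))"
    using proportional_sym[OF proportional_id_tens_id[of ?r "?q * n"]] by simp
  have "proportional (DComp (collapse m) (DTens (DId m) (fpow p)))
          (DComp (collapse m) (DTens (DTens (DId ?r) (DId (?q * n))) (fpow p)))"
    by (rule proportional_comp[OF proportional_refl proportional_tens[OF split proportional_refl]])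
      simp_all
  also have "proportional \<dots> (DComp (collapse m) (DTens (DId ?r) (DTens (DId (?q * n)) (fpow p))))"
    by (rule proportional_comp[OF proportional_refl proportional_tens_assoc]) simp_all
  also have "proportional \<dots>
      (DTens (DComp (DId ?r) (DId ?r)) (DComp (fpow ?q) (DTens (DId (?q * n)) (fpow p))))"
    unfolding collapse_def by (rule proportional_sym, rule proportional_interchange) simp_all
  also have "proportional \<dots> (DTens (DId ?r) (fpow (?q + p)))"
    by (rule proportional_tens[OF proportional_id_comp fpow_comp_id_tens_fpow]) simp_all
  also have "DTens (DId ?r) (fpow (?q + p)) = collapse (m + p * n)"
    unfolding collapse_def using n_pos by (simp add: add.commute)
  finally show ?thesis .
qed

lemma collapse_tens_collapse:
  "proportional (DComp (collapse (k mod n + k' mod n)) (DTens (collapse k) (collapse k')))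
     (collapse (k + k'))"
proof -
  let ?r = "k mod n" and ?r' = "k' mod n" and ?p = "k div n" and ?p' = "k' div n"
  have "proportional (DTens (collapse k) (collapse k'))
          (DTens (DId ?r) (DTens (fpow ?p) (DTens (DId ?r') (fpow ?p'))))"
    unfolding collapse_def by (rule proportional_tens_assoc) simp_all
  also have "proportional \<dots> (DTens (DId ?r) (DTens (DTens (fpow ?p) (DId ?r')) (fpow ?p')))"
    by (rule proportional_tens[OF proportional_refl proportional_sym[OF proportional_tens_assoc]])
      simp_all
  also have "proportional \<dots> (DTens (DId ?r) (DTens (DTens (DId ?r') (fpow ?p)) (fpow ?p')))"
    by (rule proportional_tens[OF proportional_refl
          proportional_tens[OF fpow_tens_id_swap proportional_refl]])
      simp_all
  also have "proportional \<dots> (DTens (DId ?r) (DTens (DId ?r') (DTens (fpow ?p) (fpow ?p'))))"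
    by (rule proportional_tens[OF proportional_refl proportional_tens_assoc]) simp_all
  also have "proportional \<dots> (DTens (DTens (DId ?r) (DId ?r')) (DTens (fpow ?p) (fpow ?p')))"
    by (rule proportional_sym, rule proportional_tens_assoc) simp_all
  also have "proportional \<dots> (DTens (DId (?r + ?r')) (fpow (?p + ?p')))"
    by (rule proportional_tens[OF proportional_id_tens_id fpow_tens_fpow])
  finally have regroup:
    "proportional (DTens (collapse k) (collapse k')) (DTens (DId (?r + ?r')) (fpow (?p + ?p')))" .
  have "proportional (DComp (collapse (?r + ?r')) (DTens (collapse k) (collapse k')))
          (DComp (collapse (?r + ?r')) (DTens (DId (?r + ?r')) (fpow (?p + ?p'))))"
    by (rule proportional_comp[OF proportional_refl regroup]) simp_all
  also have "proportional \<dots> (collapse (?r + ?r' + (?p + ?p') * n))"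
    by (rule collapse_comp_id_tens_fpow)
  also have "?r + ?r' + (?p + ?p') * n = k + k'"
    by (simp add: algebra_simps)
  finally show ?thesis .
qed

lemma expand_tens_expand:
  "proportional (DTens (expand l) (expand l'))
     (DComp (expand (l + l')) (collapse (l mod n + l' mod n)))"
proof -
  let ?s = "l mod n" and ?s' = "l' mod n"
  let ?X = "DTens (expand l) (expand l')"
  have "proportional ?X (DComp (DId (l + l')) ?X)"
    by (rule proportional_sym, rule proportional_id_comp) (simp_all add: mod_add_eq)
  also have "proportional \<dots> (DComp (DComp (expand (l + l')) (collapse (l + l'))) ?X)"
    by (rule proportional_comp[OF proportional_sym[OF expand_comp_collapse] proportional_refl])
      (simp_all add: mod_add_eq)
  also have "proportional \<dots> (DComp (expand (l + l')) (DComp (collapse (l + l')) ?X))"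
    by (rule proportional_comp_assoc) (simp_all add: mod_add_eq)
  also have "proportional \<dots>
      (DComp (expand (l + l')) (DComp (DComp (collapse (?s + ?s')) (DTens (collapse l) (collapse l'))) ?X))"
    by (rule proportional_comp[OF proportional_refl
          proportional_comp[OF proportional_sym[OF collapse_tens_collapse] proportional_refl]])
      (simp_all add: mod_add_eq)
  also have "proportional \<dots>
      (DComp (expand (l + l')) (DComp (collapse (?s + ?s')) (DComp (DTens (collapse l) (collapse l')) ?X)))"
    by (rule proportional_comp[OF proportional_refl proportional_comp_assoc]) (simp_all add: mod_add_eq)
  also have "proportional \<dots> (DComp (expand (l + l')) (DComp (collapse (?s + ?s'))
      (DTens (DComp (collapse l) (expand l)) (DComp (collapse l') (expand l')))))"
    by (rule proportional_comp[OF proportional_refl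
          proportional_comp[OF proportional_refl proportional_sym[OF proportional_interchange]]])
      (simp_all add: mod_add_eq)
  also have "proportional \<dots>
      (DComp (expand (l + l')) (DComp (collapse (?s + ?s')) (DTens (DId ?s) (DId ?s'))))"
    by (rule proportional_comp[OF proportional_refl
          proportional_comp[OF proportional_refl
            proportional_tens[OF collapse_comp_expand collapse_comp_expand]]])
      (simp_all add: mod_add_eq)
  also have "proportional \<dots> (DComp (expand (l + l')) (DComp (collapse (?s + ?s')) (DId (?s + ?s'))))"
    by (rule proportional_comp[OF proportional_refl
          proportional_comp[OF proportional_refl proportional_id_tens_id]])
      (simp_all add: mod_add_eq)
  also have "proportional \<dots> (DComp (expand (l + l')) (collapse (?s + ?s')))"
    by (rule proportional_comp[OF proportional_refl proportional_comp_id]) (simp_all add: mod_add_eq)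
  finally show ?thesis .
qed

lemma proportional_unit_pad: "dwt n t \<Longrightarrow> proportional t (DTens (DId 0) (DTens t (DId 0)))"
proof -
  assume "dwt n t"
  then have "proportional t (DTens t (DId 0))"
    by (rule proportional_sym[OF proportional_tens_unit])
  also have "proportional \<dots> (DTens (DId 0) (DTens t (DId 0)))"
    using \<open>dwt n t\<close> by (intro proportional_sym[OF proportional_unit_tens]) simp
  finally show ?thesis .
qed

lemma proportional_normal_form: "dwt n t \<Longrightarrow> proportional t (normal_form (ddom n t) (dcod n t))"
proof (induction t)
  case (DId k)
  then show ?case unfolding normal_form_def using proportional_sym[OF expand_comp_collapse] by simp
next
  case Df
  have "proportional Df (DComp (DId 0) Df)"
    by (rule proportional_sym, rule proportional_id_comp) simp_all
  also have "proportional \<dots> (DComp (DTens (DId 0) (DId 0)) (DTens (DId 0) (DTens Df (DId 0))))"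
    by (rule proportional_comp[OF proportional_sym[OF proportional_unit_tens] proportional_unit_pad])
      simp_all
  also have "DComp (DTens (DId 0) (DId 0)) (DTens (DId 0) (DTens Df (DId 0))) = normal_form n 0"
    unfolding normal_form_def collapse_def expand_def using n_pos by simp
  finally show ?case by simp
next
  case Dg
  have "proportional Dg (DComp Dg (DId 0))"
    by (rule proportional_sym, rule proportional_comp_id) simp_all
  also have "proportional \<dots> (DComp (DTens (DId 0) (DTens Dg (DId 0))) (DTens (DId 0) (DId 0)))"
    by (rule proportional_comp[OF proportional_unit_pad proportional_sym[OF proportional_unit_tens]])
      simp_all
  also have "DComp (DTens (DId 0) (DTens Dg (DId 0))) (DTens (DId 0) (DId 0)) = normal_form 0 n"
    unfolding normal_form_def collapse_def expand_def using n_pos by simp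
  finally show ?case by simp
next
  case (DComp a b)
  let ?k = "ddom n b" and ?j = "dcod n b" and ?l = "dcod n a"
  from DComp.prems have wa: "dwt n a" and wb: "dwt n b" and ab: "ddom n a = ?j" by auto
  have ma: "?j mod n = ?l mod n" and mb: "?k mod n = ?j mod n"
    using wa wb ab dwt_ddom_mod_eq_dcod_mod by metis+
  have "proportional (DComp a b) (DComp (normal_form ?j ?l) (normal_form ?k ?j))"
    using DComp.IH wa wb ab by (intro proportional_comp) simp_all
  also have "proportional \<dots> (DComp (expand ?l) (DComp (collapse ?j) (DComp (expand ?j) (collapse ?k))))"
    unfolding normal_form_def by (rule proportional_comp_assoc) (simp_all add: mb ma)
  also have "proportional \<dots> (DComp (expand ?l) (DComp (DComp (collapse ?j) (expand ?j)) (collapse ?k)))"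
    by (rule proportional_comp[OF proportional_refl proportional_sym[OF proportional_comp_assoc]])
      (simp_all add: mb ma)
  also have "proportional \<dots> (DComp (expand ?l) (DComp (DId (?j mod n)) (collapse ?k)))"
    by (rule proportional_comp[OF proportional_refl
          proportional_comp[OF collapse_comp_expand proportional_refl]])
      (simp_all add: mb ma)
  also have "proportional \<dots> (DComp (expand ?l) (collapse ?k))"
    by (rule proportional_comp[OF proportional_refl proportional_id_comp]) (simp_all add: mb ma)
  finally show ?case unfolding normal_form_def by simp
next
  case (DTens a b)
  let ?k = "ddom n a" and ?l = "dcod n a" and ?k' = "ddom n b" and ?l' = "dcod n b"
  from DTens.prems have wa: "dwt n a" and wb: "dwt n b" by auto
  have ma: "?k mod n = ?l mod n" and mb: "?k' mod n = ?l' mod n"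
    using wa wb dwt_ddom_mod_eq_dcod_mod by metis+
  have mab: "(?k + ?k') mod n = (?l + ?l') mod n"
    using ma mb by (metis mod_add_cong)
  have "proportional (DTens a b) (DTens (normal_form ?k ?l) (normal_form ?k' ?l'))"
    using DTens.IH wa wb by (intro proportional_tens) simp_all
  also have "proportional \<dots> (DComp (DTens (expand ?l) (expand ?l')) (DTens (collapse ?k) (collapse ?k')))"
    unfolding normal_form_def by (rule proportional_interchange) (simp_all add: ma mb)
  also have "proportional \<dots>
      (DComp (DComp (expand (?l + ?l')) (collapse (?l mod n + ?l' mod n)))
        (DTens (collapse ?k) (collapse ?k')))"
    by (rule proportional_comp[OF expand_tens_expand proportional_refl]) (simp_all add: ma mb mod_add_eq)
  also have "proportional \<dots>
      (DComp (expand (?l + ?l'))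
        (DComp (collapse (?k mod n + ?k' mod n)) (DTens (collapse ?k) (collapse ?k'))))"
    unfolding ma mb by (rule proportional_comp_assoc) (simp_all add: ma mb mod_add_eq)
  also have "proportional \<dots> (DComp (expand (?l + ?l')) (collapse (?k + ?k')))"
    by (rule proportional_comp[OF proportional_refl collapse_tens_collapse]) (simp_all add: mab mod_add_eq)
  finally show ?case unfolding normal_form_def by simp
qed

section \<open>The functor on terms\<close>

lemma vassoc_residue_one:
  "vassoc z n (k mod n) (l mod n) 1 = (if Suc (l mod n) = n then z ^ (k mod n) else 1)"
proof (cases "Suc (l mod n) = n")
  case True
  then show ?thesis unfolding vassoc_def using n_pos by simp
next
  case False
  moreover have "l mod n < n" using n_pos by simp
  ultimately have "Suc (l mod n) < n" by simp
  then show ?thesis unfolding vassoc_def using False by simp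
qed

lemma Jmon_closed_form: "Jmon z n k l = inverse z ^ (k mod n * (l div n))"
proof (induction l)
  case 0
  then show ?case by simp
next
  case (Suc l)
  have "Jmon z n k (Suc l) = Jmon z n k l * inverse (vassoc z n (k mod n) (l mod n) 1)"
    by (simp only: Jmon.simps)
  also have "\<dots> = inverse z ^ (k mod n * (l div n)) *
                    inverse (if Suc (l mod n) = n then z ^ (k mod n) else 1)"
    by (simp only: Suc.IH vassoc_residue_one)
  also have "\<dots> = inverse z ^ (k mod n * (Suc l div n))"
    by (cases "Suc (l mod n) = n")
      (simp_all add: div_Suc mod_Suc power_add power_inverse distrib_left)
  finally show ?case .
qed

lemma Jmon_nonzero: "Jmon z n k l \<noteq> 0"
  using z_nonzero by (simp add: Jmon_closed_form)

lemma Jmon_zero_left [simp]: "Jmon z n 0 l = 1"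
  by (simp add: Jmon_closed_form)

lemma vassoc_nonzero: "vassoc z n a b c \<noteq> 0"
  using z_nonzero by (simp add: vassoc_def)

text \<open>The associativity coherence of the monoidal functor \<open>(F, J)\<close>.\<close>

lemma Jmon_assoc:
  "Jmon z n (a + b) c * Jmon z n a b =
     vassoc z n (a mod n) (b mod n) (c mod n) * Jmon z n a (b + c) * Jmon z n b c"
proof -
  define ra rb rc where "ra = a mod n" and "rb = b mod n" and "rc = c mod n"
  define carry_bc carry_ab where "carry_bc = (rb + rc) div n" and "carry_ab = (ra + rb) div n"
  have vassoc: "vassoc z n ra rb rc = z ^ (ra * carry_bc)"
  proof -
    have "rb + rc - (rb + rc) mod n = n * carry_bc"
      by (simp add: carry_bc_def minus_mod_eq_mult_div)
    then have "ra * (rb + rc - (rb + rc) mod n) div n = ra * carry_bc"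
      using n_pos by simp
    then show ?thesis by (simp add: vassoc_def)
  qed
  have "(a + b) mod n = (ra + rb) mod n"
    by (simp add: ra_def rb_def mod_add_eq)
  then have carry: "ra + rb = (a + b) mod n + n * carry_ab"
    unfolding carry_ab_def by (metis mod_mult_div_eq)
  have "(b + c) div n = b div n + c div n + carry_bc"
    unfolding carry_bc_def rb_def rc_def by (rule div_add1_eq)
  then have "ra * ((b + c) div n) + rb * (c div n) = ra * (b div n + c div n + carry_bc) + rb * (c div n)"
    by simp
  also have "\<dots> = ra * (b div n) + ra * carry_bc + (ra + rb) * (c div n)"
    by (simp add: algebra_simps)
  also have "\<dots> = ra * (b div n) + ra * carry_bc + (a + b) mod n * (c div n) + n * (carry_ab * (c div n))"
    by (simp add: carry algebra_simps)
  finally have exponent: "ra * ((b + c) div n) + rb * (c div n) =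
      ((a + b) mod n * (c div n) + ra * (b div n)) + ra * carry_bc + n * (carry_ab * (c div n))" 
    by simp
  have root: "inverse z ^ (n * m) = 1" for m
    using z_pow_n by (simp add: power_mult power_inverse)
  have cancel: "z ^ m * inverse z ^ m = 1" for m
    using z_nonzero by (simp add: power_inverse)
  have J_a: "Jmon z n a m = inverse z ^ (ra * (m div n))" for m
    by (simp add: Jmon_closed_form ra_def)
  have J_b: "Jmon z n b m = inverse z ^ (rb * (m div n))" for m
    by (simp add: Jmon_closed_form rb_def)
  have "vassoc z n ra rb rc * Jmon z n a (b + c) * Jmon z n b c =
        z ^ (ra * carry_bc) * inverse z ^ (ra * ((b + c) div n) + rb * (c div n))"
    by (simp add: vassoc J_a J_b power_add)
  also have "\<dots> = (z ^ (ra * carry_bc) * inverse z ^ (ra * carry_bc))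
                    * inverse z ^ ((a + b) mod n * (c div n) + ra * (b div n))"
    unfolding exponent by (simp add: power_add root)
  also have "\<dots> = Jmon z n (a + b) c * Jmon z n a b"
    by (simp add: cancel J_a Jmon_closed_form[of "a + b"] power_add)
  finally show ?thesis by (simp add: ra_def rb_def rc_def)
qed

lemma Fterm_nonzero: "Fterm z n t \<noteq> 0"
  by (induction t) (auto simp: Jmon_nonzero)

lemma Fterm_tens_assoc:
  assumes "dwt n a" and "dwt n b" and "dwt n c"
  shows "Fterm z n (DTens (DTens a b) c) = Fterm z n (DTens a (DTens b c))"
proof -
  let ?J = "Jmon z n" and ?F = "Fterm z n"
  let ?ka = "ddom n a" and ?kb = "ddom n b" and ?kc = "ddom n c"
  let ?la = "dcod n a" and ?lb = "dcod n b" and ?lc = "dcod n c"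
  let ?V = "vassoc z n (?la mod n) (?lb mod n) (?lc mod n)"
  have cod: "?J (?la + ?lb) ?lc * ?J ?la ?lb = ?V * (?J ?la (?lb + ?lc) * ?J ?lb ?lc)"
    by (simp add: Jmon_assoc mult.assoc)
  have "?J (?ka + ?kb) ?kc * ?J ?ka ?kb = ?V * (?J ?ka (?kb + ?kc) * ?J ?kb ?kc)"
    using assms by (simp add: Jmon_assoc mult.assoc dwt_ddom_mod_eq_dcod_mod)
  moreover have "?F (DTens (DTens a b) c) =
      (?J (?la + ?lb) ?lc * ?J ?la ?lb) * (?F a * ?F b * ?F c) / (?J (?ka + ?kb) ?kc * ?J ?ka ?kb)"
    by (simp add: field_simps Jmon_nonzero)
  moreover have "?F (DTens a (DTens b c)) =
      (?J ?la (?lb + ?lc) * ?J ?lb ?lc) * (?F a * ?F b * ?F c) / (?J ?ka (?kb + ?kc) * ?J ?kb ?kc)"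
    by (simp add: field_simps Jmon_nonzero)
  ultimately show ?thesis
    unfolding cod by (simp add: vassoc_nonzero)
qed

lemma Fterm_interchange:
  assumes "ddom n a = dcod n b" and "ddom n c = dcod n d"
  shows "Fterm z n (DTens (DComp a b) (DComp c d)) = Fterm z n (DComp (DTens a c) (DTens b d))"
  using assms by (simp add: field_simps Jmon_nonzero)

lemma Fterm_twist: "Fterm z n (DTens (DId 1) Df) = z * Fterm z n (DTens Df (DId 1))"
proof (cases "n = 1")
  case True
  then have "z = 1"
    using z_pow_n by simp
  then have "Jmon z n k l = 1" for k l
    unfolding Jmon_closed_form by simp
  then show ?thesis
    by (simp only: Fterm.simps ddom.simps dcod.simps) (simp add: \<open>z = 1\<close>)
next
  case False
  then show ?thesis
    using n_pos by (simp only: Fterm.simps ddom.simps dcod.simps Jmon_closed_form) simp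
qed

section \<open>The functor on linear combinations\<close>

definition Flin :: "(dterm \<Rightarrow> 'k) \<Rightarrow> 'k" where
  "Flin x = (\<Sum>t\<in>{t. x t \<noteq> 0}. x t * Fterm z n t)"

lemma Flin_superset:
  "finite A \<Longrightarrow> {t. x t \<noteq> 0} \<subseteq> A \<Longrightarrow> Flin x = (\<Sum>t\<in>A. x t * Fterm z n t)"
  unfolding Flin_def by (rule sum.mono_neutral_left) auto

lemma Flin_single_diff: "Flin (\<lambda>u. single a u - c * single b u) = Fterm z n a - c * Fterm z n b"
proof -
  have "Flin (\<lambda>u. single a u - c * single b u) =
          (\<Sum>t\<in>{a, b}. (single a t - c * single b t) * Fterm z n t)"
    by (rule Flin_superset) (auto simp: single_def)
  then show ?thesis by (cases "a = b") (auto simp: single_def algebra_simps)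
qed

lemma Flin_ldiff: "Flin (ldiff a b) = Fterm z n a - Fterm z n b"
  using Flin_single_diff[of a 1 b] by (simp add: ldiff_def)

lemma Flin_add:
  assumes "finite {t. x t \<noteq> 0}" and "finite {t. y t \<noteq> 0}"
  shows "Flin (\<lambda>s. x s + y s) = Flin x + Flin y"
proof -
  let ?A = "{t. x t \<noteq> 0} \<union> {t. y t \<noteq> 0}"
  have "Flin (\<lambda>s. x s + y s) = (\<Sum>t\<in>?A. x t * Fterm z n t) + (\<Sum>t\<in>?A. y t * Fterm z n t)"
    using assms by (subst Flin_superset[of ?A]) (auto simp: algebra_simps sum.distrib)
  also have "\<dots> = Flin x + Flin y"
    using assms by (simp add: Flin_superset[of ?A])
  finally show ?thesis .
qed

lemma Flin_smult: "finite {t. x t \<noteq> 0} \<Longrightarrow> Flin (\<lambda>s. c * x s) = c * Flin x"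
  by (subst Flin_superset[of "{t. x t \<noteq> 0}"]) (auto simp: Flin_def sum_distrib_left ac_simps)

lemma Flin_diff:
  "finite {t. x t \<noteq> 0} \<Longrightarrow> finite {t. y t \<noteq> 0} \<Longrightarrow> Flin (\<lambda>s. x s - y s) = Flin x - Flin y"
  using Flin_add[of x "\<lambda>s. (- 1) * y s"] Flin_smult[of y "- 1"]
  by (simp add: finite_subset[of "{t. - y t \<noteq> 0}" "{t. y t \<noteq> 0}"])

lemma Flin_image:
  assumes "{u. y u \<noteq> 0} = h ` {s. x s \<noteq> 0}" and "inj h"
  shows "Flin y = (\<Sum>s\<in>{s. x s \<noteq> 0}. y (h s) * Fterm z n (h s))"
  unfolding Flin_def assms(1) using assms(2) by (simp add: sum.reindex inj_on_def)

lemma Flin_lcomp: "Flin (lcomp t x) = Fterm z n t * Flin x"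
proof -
  have "Flin (lcomp t x) = (\<Sum>s\<in>{s. x s \<noteq> 0}. x s * Fterm z n (DComp t s))"
    by (subst Flin_image[OF support_lcomp]) (auto simp: inj_def lcomp_def)
  then show ?thesis
    by (simp add: Flin_def sum_distrib_left ac_simps)
qed

lemma Flin_rcomp: "Flin (rcomp t x) = Fterm z n t * Flin x"
proof -
  have "Flin (rcomp t x) = (\<Sum>s\<in>{s. x s \<noteq> 0}. x s * Fterm z n (DComp s t))"
    by (subst Flin_image[OF support_rcomp]) (auto simp: inj_def rcomp_def)
  then show ?thesis
    by (simp add: Flin_def sum_distrib_left ac_simps)
qed

lemma Flin_ltens:
  assumes "\<And>s. x s \<noteq> 0 \<Longrightarrow> dhom n k l s"
  shows "Flin (ltens t x) =
    Jmon z n (dcod n t) l * Fterm z n t * inverse (Jmon z n (ddom n t) k) * Flin x"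
proof -
  have "Flin (ltens t x) = (\<Sum>s\<in>{s. x s \<noteq> 0}. x s * Fterm z n (DTens t s))"
    by (subst Flin_image[OF support_ltens]) (auto simp: inj_def ltens_def)
  also have "\<dots> = (\<Sum>s\<in>{s. x s \<noteq> 0}.
      (Jmon z n (dcod n t) l * Fterm z n t * inverse (Jmon z n (ddom n t) k)) * (x s * Fterm z n s))"
    using assms by (intro sum.cong) (auto simp: dhom_def)
  finally show ?thesis
    by (simp add: Flin_def sum_distrib_left)
qed

lemma Flin_rtens:
  assumes "\<And>s. x s \<noteq> 0 \<Longrightarrow> dhom n k l s"
  shows "Flin (rtens t x) =
    Jmon z n l (dcod n t) * Fterm z n t * inverse (Jmon z n k (ddom n t)) * Flin x"
proof -
  have "Flin (rtens t x) = (\<Sum>s\<in>{s. x s \<noteq> 0}. x s * Fterm z n (DTens s t))"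
    by (subst Flin_image[OF support_rtens]) (auto simp: inj_def rtens_def)
  also have "\<dots> = (\<Sum>s\<in>{s. x s \<noteq> 0}.
      (Jmon z n l (dcod n t) * Fterm z n t * inverse (Jmon z n k (ddom n t))) * (x s * Fterm z n s))"
    using assms by (intro sum.cong) (auto simp: dhom_def)
  finally show ?thesis
    by (simp add: Flin_def sum_distrib_left)
qed

lemma Flin_single: "Flin (single t) = Fterm z n t"
  by (subst Flin_superset[of "{t}"]) (auto simp: single_def)

lemma Flin_dnull: "dnull z n k l x \<Longrightarrow> Flin x = 0"
proof (induction rule: dnull.induct)
  case (zero k l)
  then show ?case by (simp add: Flin_def)
next
  case (add k l x y)
  then show ?case
    using dnull_is_dlc[OF add.hyps(1)] dnull_is_dlc[OF add.hyps(2)]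
    by (simp add: Flin_add is_dlc_def)
next
  case (smult k l x c)
  then show ?case
    using dnull_is_dlc[OF smult.hyps] by (simp add: Flin_smult is_dlc_def)
next
  case (tassoc k1 l1 a k2 l2 b k3 l3 c)
  then have "Fterm z n (DTens (DTens a b) c) = Fterm z n (DTens a (DTens b c))"
    by (intro Fterm_tens_assoc) (auto simp: dhom_def)
  then show ?case by (simp add: Flin_ldiff)
next
  case (interchange j l a i b j' l' c i' d)
  then have "Fterm z n (DTens (DComp a b) (DComp c d)) = Fterm z n (DComp (DTens a c) (DTens b d))"
    by (intro Fterm_interchange) (auto simp: dhom_def)
  then show ?case by (simp add: Flin_ldiff)
next
  case rel_twist
  then show ?case by (simp only: Flin_single_diff Fterm_twist) simp
next
  case (compL l m t k x)
  then show ?case by (simp add: Flin_lcomp)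
next
  case (compR j k t l x)
  then show ?case by (simp add: Flin_rcomp)
next
  case (tensL k' l' t k l x)
  have support: "\<And>s. x s \<noteq> 0 \<Longrightarrow> dhom n k l s"
    using dnull_is_dlc[OF tensL.hyps(2)] by (simp add: is_dlc_def)
  show ?case by (simp add: Flin_ltens[OF support] tensL.IH)
next
  case (tensR k' l' t k l x)
  have support: "\<And>s. x s \<noteq> 0 \<Longrightarrow> dhom n k l s"
    using dnull_is_dlc[OF tensR.hyps(2)] by (simp add: is_dlc_def)
  show ?case by (simp add: Flin_rtens[OF support] tensR.IH)
qed (simp_all add: Flin_ldiff Jmon_nonzero mult.assoc)

lemma Fhom_eq_Flin:
  assumes "is_dlc n k l x"
  shows "Fhom z n k l x = Flin x"
proof (cases "k mod n = l mod n")
  case True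
  then show ?thesis by (simp add: Fhom_def Flin_def)
next
  case False
  then have "x t = 0" for t
    using assms dwt_ddom_mod_eq_dcod_mod by (fastforce simp: is_dlc_def dhom_def)
  then show ?thesis by (simp add: Fhom_def Flin_def)
qed

lemma dnull_diff_smult_normal_form:
  assumes "is_dlc n k l x"
  shows "\<exists>C. dnull z n k l (\<lambda>u. x u - C * single (normal_form k l) u)"
proof -
  let ?N = "normal_form k l" and ?S = "{t. x t \<noteq> 0}"
  have fin: "finite ?S" and hom: "\<And>t. t \<in> ?S \<Longrightarrow> dhom n k l t"
    using assms by (auto simp: is_dlc_def)
  have "\<exists>c. eq_smult t c ?N" if "t \<in> ?S" for t
    using proportional_normal_form hom[OF that] unfolding proportional_def dhom_def by blast
  then obtain c where c: "\<And>t. t \<in> ?S \<Longrightarrow> eq_smult t (c t) ?N"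
    by metis
  have "dnull z n k l (\<lambda>u. \<Sum>t\<in>?S. x t * (single t u - c t * single ?N u))"
    using fin c hom by (intro dnull_sum) (auto simp: eq_smult_def dhom_def)
  moreover have "(\<Sum>t\<in>?S. x t * (single t u - c t * single ?N u)) =
      x u - (\<Sum>t\<in>?S. x t * c t) * single ?N u" for u
  proof -
    have "(\<Sum>t\<in>?S. x t * single t u) = (\<Sum>t\<in>?S. if t = u then x t else 0)"
      by (rule sum.cong) (auto simp: single_def)
    also have "\<dots> = x u"
      using fin by (simp add: sum.delta')
    finally show ?thesis
      by (simp add: right_diff_distrib sum_subtractf sum_distrib_right mult.assoc)
  qed
  ultimately show ?thesis by auto
qed

lemma dnull_of_Flin_eq_0:
  assumes "is_dlc n k l x" and "Flin x = 0"
  shows "dnull z n k l x"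
proof -
  let ?N = "normal_form k l"
  obtain C where null: "dnull z n k l (\<lambda>u. x u - C * single ?N u)"
    using dnull_diff_smult_normal_form[OF assms(1)] by blast
  have single_support: "finite {u. single ?N u \<noteq> 0}"
    by (rule finite_subset[of _ "{?N}"]) (auto simp: single_def)
  then have "Flin (\<lambda>u. C * single ?N u) = C * Fterm z n ?N"
    using Flin_smult[OF single_support, of C] by (simp add: Flin_single)
  moreover have "finite {u. C * single ?N u \<noteq> 0}"
    using single_support by (rule finite_subset[rotated]) auto
  ultimately have "Flin (\<lambda>u. x u - C * single ?N u) = Flin x - C * Fterm z n ?N"
    using assms(1) by (simp add: Flin_diff is_dlc_def)
  then have "C * Fterm z n ?N = 0"
    using Flin_dnull[OF null] assms(2) by simp
  then have "C = 0"
    by (simp add: Fterm_nonzero)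
  then show ?thesis
    using null by simp
qed

theorem Fhom_injective:
  assumes "is_dlc n k l x" and "is_dlc n k l y" and "Fhom z n k l x = Fhom z n k l y"
  shows "dnull z n k l (\<lambda>s. x s - y s)"
proof (rule dnull_of_Flin_eq_0)
  show "is_dlc n k l (\<lambda>s. x s - y s)"
    using assms(1,2) by (rule is_dlc_diff)
  show "Flin (\<lambda>s. x s - y s) = 0"
    using assms by (simp add: Flin_diff Fhom_eq_Flin is_dlc_def)
qed

end

theorem mainTheorem13:
  fixes z :: "'k::field_char_0" and n :: nat
  assumes "alg_closed TYPE('k)"
    and "n \<ge> 1"
    and "z ^ n = 1"
  shows "\<forall>k x y. is_dlc n k 0 x \<longrightarrow> is_dlc n k 0 y \<longrightarrow>
           Fhom z n k 0 x = Fhom z n k 0 y \<longrightarrow> dnull z n k 0 (\<lambda>s. x s - y s)"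
proof -
  interpret nth_root_of_unity z n
    using assms(2,3) by unfold_locales
  show ?thesis
    using Fhom_injective by blast
qed

end
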